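(* Let $h\ge1$, $P(u)=u^{-h}+u^{-h+1}+\dots+u^{h-1}+u^h$, and let $U(z)$ be the root of $1-z^hP(U)=0$ whose expansion at $0$ begins $U(z)=z+\cdots$. Then $U(z)$ is a power series in $z$ (not a genuine Puiseux series), and, with $\omega=e^{2\pi\mathrm{i}/h}$, the small roots $u_i(z)$ and the large roots $v_i(z)$ of $1-zP(u)=0$ are $$u_i(z)=U(\omega^{i-1}z^{1/h}),\qquad v_i(z)=1/U(\omega^{i-1}z^{1/h}),\qquad i=1,\dots,h.$$ Moreover, for every integer $m\ge1$, $$U^m(z)=\sum_{n\ge m}\frac mn\binom{n/h}{n-m}_{2h+1}z^n.$$
   Context: Small roots of $1-zP(u)=0$ are the roots (Puiseux series in $z$) tending to $0$ as $z\to0$; large roots are those with $|v(z)|\to\infty$ as $z\to0$. For a real number $\alpha$, an integer $m\ge1$ and an integer $k$, $\binom{\alpha}{k}_m:=[u^k](1+u+\dots+u^{m-1})^{\alpha}$, where the power is the formal power series with constant term $1$ (so the value is $0$ for $k<0$). *)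

theory Defs
  imports "HOL-Computational_Algebra.Computational_Algebra" "HOL-Library.Multiset"
begin

(* Q(u) = 1 + u + ... + u^(2h), as a polynomial; u^h P(u) = Q(u). *)
definition Qpoly :: "nat \<Rightarrow> 'a::comm_ring_1 poly" where
  "Qpoly h = (\<Sum>k\<le>2*h. monom 1 k)"

(* The equation 1 - z P(u) = 0, multiplied by u^h: u^h - z Q(u) = 0,
   as a polynomial in u with coefficients in the Laurent series field C((t)),
   where z = t^h (t plays the role of z^(1/h)). *)
definition root_eq_poly :: "nat \<Rightarrow> complex fls poly" where
  "root_eq_poly h = monom 1 h - smult (fls_X ^ h) (Qpoly h)"

(* small roots: tend to 0 (positive valuation); large roots: tend to infinity *)
definition small_roots :: "complex fls poly \<Rightarrow> complex fls multiset" where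
  "small_roots p = filter_mset (\<lambda>r. r \<noteq> 0 \<and> 0 < fls_subdegree r) (proots p)"

definition large_roots :: "complex fls poly \<Rightarrow> complex fls multiset" where
  "large_roots p = filter_mset (\<lambda>r. r \<noteq> 0 \<and> fls_subdegree r < 0) (proots p)"

(* binom_m alpha m k = [u^k] (1 + u + ... + u^(m-1))^alpha, 0 for k < 0 *)
definition gbinom_m :: "real \<Rightarrow> nat \<Rightarrow> int \<Rightarrow> real" where
  "gbinom_m \<alpha> m k = (if k < 0 then 0 else
     (fps_binomial \<alpha> oo (\<Sum>j\<in>{1..<m}. fps_X ^ j)) $ nat k)"

end

theory Submission
  imports Defs
begin

(* Dividing by z^h, the equation U^h = z^h Q(U) with Q(u) = u^h P(u) = 1 + u + ... + u^(2h) and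
   U = z + ... compares two series with constant term 1, so taking h-th roots turns it into the
   Lagrange form U = z \<phi>(U) with \<phi> = Q^(1/h). Series reversion gives existence, and Lagrange
   inversion [z^n] U^m = (m/n) [u^(n-m)] \<phi>^n = (m/n) [u^(n-m)] Q^(n/h) gives the coefficients,
   hence also uniqueness. Lagrange inversion itself is a residue computation with formal Laurent
   series: n [z^n] U^m is the residue of z^(-n) (U^m)', and substituting z = U turns it into a
   residue that can be read off.
   For the roots write z = t^h. Since \<omega>^h = 1, each U(\<omega>^i t) solves u^h = t^h Q(u) and has
   valuation 1; since Q is palindromic, their inverses are solutions of valuation -1. These 2h
   distinct roots exhaust the roots of a polynomial of degree 2h. *)

lemma fls_residue_sum: "fls_residue (sum f A) = (\<Sum>i\<in>A. fls_residue (f i))"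
  by (simp add: fls_nth_sum)

lemma fps_to_fls_sum: "fps_to_fls (sum f A) = (\<Sum>i\<in>A. fps_to_fls (f i))"
  by (induction A rule: infinite_finite_induct) simp_all

lemma fls_residue_inverse_power_times_deriv:
  fixes u :: "'a::field_char_0 fls"
  assumes "fls_subdegree u = 1"
  shows "fls_residue (inverse u ^ Suc k * fls_deriv u) = (if k = 0 then 1 else 0)"
proof (cases k)
  case 0
  then show ?thesis
    using fls_residue_deriv_times_inverse_eq_subdegree(2)[of u] assms by simp
next
  case (Suc q)
  have "fls_deriv (inverse u ^ k) = - of_nat k * (inverse u ^ Suc k * fls_deriv u)"
    using fls_deriv_power[of "inverse u" k]
    by (simp add: Suc fls_inverse_deriv power2_eq_square algebra_simps)
  then have "inverse u ^ Suc k * fls_deriv u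
      = fls_const (- 1 / of_nat k) * fls_deriv (inverse u ^ k)"
    by (simp add: Suc fls_const_divide_const fls_of_nat fls_const_mult_const[symmetric]
        del: of_nat_Suc)
  then show ?thesis
    by (simp only: fls_residue_fls_const_times fls_residue_deriv) (simp add: Suc)
qed

lemma fls_residue_inverse_power_times_power_deriv:
  fixes u :: "'a::field_char_0 fls"
  assumes "fls_subdegree u = 1" "i \<le> j"
  shows "fls_residue (inverse u ^ Suc j * u ^ i * fls_deriv u) = (if i = j then 1 else 0)"
proof -
  have "u \<noteq> 0" using assms(1) by auto
  have "inverse u ^ Suc j * u ^ i = inverse u ^ Suc (j - i) * (inverse u * u) ^ i"
    using assms(2) by (simp add: power_mult_distrib power_add[symmetric])
  then have "inverse u ^ Suc j * u ^ i * fls_deriv u = inverse u ^ Suc (j - i) * fls_deriv u"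
    using \<open>u \<noteq> 0\<close> by simp
  then show ?thesis
    using fls_residue_inverse_power_times_deriv[OF assms(1), of "j - i"] assms(2)
    by (simp only:) simp
qed

lemma fls_residue_compose_times_deriv:
  fixes U G :: "'a::field_char_0 fps"
  assumes U0: "U $ 0 = 0" and U1: "U $ 1 \<noteq> 0"
  shows "fls_residue (inverse (fps_to_fls U) ^ Suc j * fps_to_fls ((G oo U) * fps_deriv U)) = G $ j"
proof -
  define u where "u = fps_to_fls U"
  define R where "R = fps_shift (Suc j) G"
  have "subdegree U = 1" using U0 U1 by (intro subdegreeI) auto
  then have sd: "fls_subdegree u = 1" using U1 by (auto simp: u_def fls_subdegree_fls_to_fps)
  then have "u \<noteq> 0" by auto
  have "fps_cutoff (Suc j) G = (\<Sum>i=0..j. fps_const (G$i) * fps_X^i)"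
    by (rule fps_ext) (simp add: fps_sum_rep_nth)
  then have G_split: "G = (\<Sum>i=0..j. fps_const (G$i) * fps_X^i) + fps_X^(Suc j) * R"
    using fps_shift_cutoff'[of "Suc j" G] by (simp add: R_def add.commute)
  have "G oo U = ((\<Sum>i=0..j. fps_const (G$i) * fps_X^i) oo U) + ((fps_X^(Suc j) * R) oo U)"
    by (subst G_split) (simp add: fps_compose_add_distrib)
  also have "\<dots> = (\<Sum>i=0..j. fps_const (G$i) * U^i) + U^(Suc j) * (R oo U)"
    using U0 by (simp add: fps_compose_sum_distrib fps_compose_mult_distrib fps_X_power_compose)
  finally have "inverse u ^ Suc j * fps_to_fls ((G oo U) * fps_deriv U)
     = (\<Sum>i=0..j. fls_const (G$i) * (inverse u ^ Suc j * u ^ i * fls_deriv u))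
       + (inverse u * u) ^ Suc j * fps_to_fls ((R oo U) * fps_deriv U)"
    by (simp add: algebra_simps sum_distrib_left sum_distrib_right fls_times_fps_to_fls
        fps_to_fls_sum fps_to_fls_power fps_const_to_fls u_def fls_deriv_fps_to_fls
        power_mult_distrib)
  also have "(inverse u * u) ^ Suc j = 1" using \<open>u \<noteq> 0\<close> by simp
  finally have "inverse u ^ Suc j * fps_to_fls ((G oo U) * fps_deriv U)
     = (\<Sum>i=0..j. fls_const (G$i) * (inverse u ^ Suc j * u ^ i * fls_deriv u))
       + fps_to_fls ((R oo U) * fps_deriv U)" by simp
  moreover have "fls_residue (fps_to_fls ((R oo U) * fps_deriv U)) = 0"
    by (rule fls_residue_power_series) (simp add: fls_subdegree_fls_to_fps_gt0)
  ultimately have "fls_residue (inverse u ^ Suc j * fps_to_fls ((G oo U) * fps_deriv U))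
      = (\<Sum>i=0..j. G$i * fls_residue (inverse u ^ Suc j * u ^ i * fls_deriv u))"
    by (simp only: fls_residue_add fls_residue_sum fls_residue_fls_const_times) simp
  also have "\<dots> = (\<Sum>i=0..j. G$i * (if i = j then 1 else 0))"
    using fls_residue_inverse_power_times_power_deriv[OF sd] by (intro sum.cong) simp_all
  also have "\<dots> = G $ j" by (simp add: if_distrib sum.delta' cong: if_cong)
  finally show ?thesis by (simp only: u_def)
qed

theorem fps_lagrange_inversion:
  fixes U \<phi> :: "'a::field_char_0 fps"
  assumes U: "U = fps_X * (\<phi> oo U)" and "\<phi> $ 0 \<noteq> 0" and "1 \<le> m" "m \<le> n"
  shows "of_nat n * (U ^ m) $ n = of_nat m * (\<phi> ^ n) $ (n - m)"
proof -
  have U0: "U $ 0 = 0" by (subst U) simp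
  have U1: "U $ 1 = \<phi> $ 0" by (subst U) (simp add: fps_X_mult_nth)
  define u where "u = fps_to_fls U"
  define w where "w = fps_to_fls (\<phi> oo U)"
  have "w \<noteq> 0"
    using \<open>\<phi> $ 0 \<noteq> 0\<close> by (metis w_def fps_compose_nth_0 fps_to_fls_eq_0_iff fps_zero_nth)
  have "u = fls_X * w" unfolding u_def w_def by (subst U) (simp add: fls_times_fps_to_fls)
  then have "u \<noteq> 0" and X_inv: "fls_X_inv = inverse u * w"
    using \<open>w \<noteq> 0\<close> by (simp_all add: fls_inverse_X[symmetric] field_simps)
  \<comment> \<open>n [z^n] U^m is the residue of z^(-n) (U^m)', and z^(-1) = U^(-1) \<phi>(U)\<close>
  have "of_nat n * (U ^ m) $ n = fps_deriv (U ^ m) $ (n - 1)"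
    using assms by (simp add: fps_deriv_nth)
  also have "\<dots> = fls_residue (fls_X_inv ^ n * fps_to_fls (fps_deriv (U ^ m)))"
    using assms by (simp add: fls_X_inv_power_times_conv_shift nat_diff_distrib)
  also have "fls_X_inv ^ n * fps_to_fls (fps_deriv (U ^ m))
     = fls_const (of_nat m) * (inverse u ^ n * u ^ (m - 1)) * (w ^ n * fls_deriv u)"
    unfolding X_inv
    by (simp add: fps_deriv_power fls_times_fps_to_fls fps_to_fls_power u_def fls_deriv_fps_to_fls
        fps_const_to_fls power_mult_distrib algebra_simps)
  also have "inverse u ^ n * u ^ (m - 1) = inverse u ^ Suc (n - m)"
  proof -
    have "inverse u ^ n = inverse u ^ Suc (n - m) * inverse u ^ (m - 1)"
      using assms by (simp only: power_add[symmetric]) (simp add: Suc_diff_le)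
    then show ?thesis
      using \<open>u \<noteq> 0\<close> by (simp add: mult.assoc power_mult_distrib[symmetric])
  qed
  also have "w ^ n * fls_deriv u = fps_to_fls ((\<phi> ^ n oo U) * fps_deriv U)"
    using U0 by (simp add: w_def u_def fps_compose_power fps_to_fls_power[symmetric]
        fls_times_fps_to_fls fls_deriv_fps_to_fls)
  finally show ?thesis
    using fls_residue_compose_times_deriv[OF U0, where G="\<phi> ^ n" and j="n - m"]
      U1 \<open>\<phi> $ 0 \<noteq> 0\<close> \<open>u \<noteq> 0\<close>
    by (simp add: mult.assoc fls_residue_fls_const_times u_def del: fls_residue_def)
qed

definition fps_of_real :: "real fps \<Rightarrow> 'a::real_algebra_1 fps" where
  "fps_of_real f = Abs_fps (\<lambda>n. of_real (f $ n))"

lemma fps_of_real_nth [simp]: "fps_of_real f $ n = of_real (f $ n)"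
  by (simp add: fps_of_real_def)

lemma fps_of_real_mult: "fps_of_real (f * g) = fps_of_real f * fps_of_real g"
  by (rule fps_ext) (simp add: fps_mult_nth)

lemma fps_of_real_power: "fps_of_real (f ^ n) = fps_of_real f ^ n"
proof (induction n)
  case 0
  show ?case by (rule fps_ext) simp
qed (simp add: fps_of_real_mult)

lemma fps_of_real_X: "fps_of_real fps_X = fps_X"
  by (rule fps_ext) (simp add: fps_X_def)

lemma fps_of_real_sum: "fps_of_real (sum f A) = (\<Sum>i\<in>A. fps_of_real (f i))"
  by (rule fps_ext) (simp add: fps_sum_nth)

lemma fps_of_real_compose: "fps_of_real (f oo g) = fps_of_real f oo fps_of_real g"
  by (rule fps_ext) (simp add: fps_compose_nth fps_of_real_power[symmetric])

lemma fps_of_real_binomial: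
  "fps_of_real (fps_binomial r) = (fps_binomial (of_real r) :: 'a::real_field fps)"
  by (rule fps_ext) (simp add: gbinomial_prod_rev)

definition Q_root :: "nat \<Rightarrow> 'a::field_char_0 fps" where
  "Q_root h = fps_binomial (1 / of_nat h) oo (\<Sum>j\<in>{1..<2*h+1}. fps_X ^ j)"

lemma Q_root_power:
  "Q_root h ^ n = fps_binomial (of_nat n / of_nat h) oo (\<Sum>j\<in>{1..<2*h+1}. fps_X ^ j)"
  by (simp add: Q_root_def fps_compose_power fps_sum_nth fps_binomial_power)

lemma Q_root_nth_0 [simp]: "Q_root h $ 0 = 1"
  by (simp add: Q_root_def)

lemma Q_root_power_self:
  assumes "h \<ge> 1"
  shows "Q_root h ^ h = (\<Sum>k\<le>2*h. fps_X ^ k :: 'a::field_char_0 fps)"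
proof -
  have "{..2*h} = insert 0 {1..<2*h+1}" by auto
  then show ?thesis
    using assms by (simp add: Q_root_power fps_binomial_1 fps_compose_add_distrib fps_sum_nth)
qed

lemma Q_root_power_nth:
  assumes "m \<le> n"
  shows "(Q_root h ^ n) $ (n - m) =
    (of_real (gbinom_m (real n / real h) (2*h+1) (int n - int m)) :: 'a::real_field)"
proof -
  have "(of_real (gbinom_m (real n / real h) (2*h+1) (int n - int m)) :: 'a)
      = fps_of_real (fps_binomial (real n / real h) oo (\<Sum>j\<in>{1..<2*h+1}. fps_X ^ j))
          $ (n - m)"
    using assms by (simp add: gbinom_m_def nat_diff_distrib)
  also have "\<dots> = (Q_root h ^ n) $ (n - m)"
    by (simp only: Q_root_power fps_of_real_compose fps_of_real_binomial fps_of_real_sum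
        fps_of_real_power fps_of_real_X) simp
  finally show ?thesis ..
qed

lemma fps_fixpoint_exists:
  fixes \<phi> :: "'a::field fps"
  assumes "\<phi> $ 0 \<noteq> 0"
  shows "\<exists>U. U = fps_X * (\<phi> oo U)"
proof -
  define \<psi> where "\<psi> = fps_X * inverse \<phi>"
  define U where "U = fps_inv \<psi>"
  have "U $ 0 = 0" by (simp add: U_def fps_inv_def)
  have "(\<phi> oo U) $ 0 \<noteq> 0" using assms by simp
  have "fps_X = \<psi> oo U"
    unfolding U_def using assms
    by (intro fps_inv_right[symmetric]) (simp_all add: \<psi>_def fps_X_mult_nth)
  also have "\<dots> = U * inverse (\<phi> oo U)"
    using \<open>U $ 0 = 0\<close> assms by (simp add: \<psi>_def fps_compose_mult_distrib fps_inverse_compose)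
  finally have X: "fps_X = U * inverse (\<phi> oo U)" .
  have "fps_X * (\<phi> oo U) = U * (inverse (\<phi> oo U) * (\<phi> oo U))"
    by (simp only: X mult.assoc)
  also have "\<dots> = U"
    using inverse_mult_eq_1[OF \<open>(\<phi> oo U) $ 0 \<noteq> 0\<close>] by simp
  finally show ?thesis by (rule exI[where x=U, OF sym])
qed

lemma fps_power_eq_imp_eq:
  fixes a b :: "'a::field_char_0 fps"
  assumes "a ^ h = b ^ h" "a $ 0 = b $ 0" "b $ 0 \<noteq> 0" "h \<ge> 1"
  shows "a = b"
proof -
  obtain k where h: "h = Suc k" using \<open>h \<ge> 1\<close> by (cases h) auto
  let ?r = "\<lambda>_ _. b $ 0"
  have r0: "(b $ 0) ^ Suc k = (b ^ Suc k) $ 0" "(b ^ Suc k) $ 0 \<noteq> 0"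
    using assms(3) by (simp_all add: fps_nth_power_0)
  have "c = fps_radical ?r (Suc k) (b ^ Suc k)" if "c ^ Suc k = b ^ Suc k" "c $ 0 = b $ 0" for c
    using radical_unique[of ?r k "b ^ Suc k" c, OF r0(1) _ r0(2)] that by argo
  then show ?thesis using assms(1,2) unfolding h by metis
qed

lemma solution_iff_fixpoint:
  fixes U :: "'a::field_char_0 fps"
  assumes "h \<ge> 1"
  shows "(U $ 0 = 0 \<and> U $ 1 = 1 \<and> U ^ h = fps_X ^ h * (\<Sum>k\<le>2*h. U ^ k))
    \<longleftrightarrow> U = fps_X * (Q_root h oo U)"
proof
  assume U: "U = fps_X * (Q_root h oo U)"
  have "U $ 0 = 0" by (subst U) simp
  have "U $ 1 = 1" by (subst U) (simp add: fps_X_mult_nth)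
  have "(Q_root h oo U) ^ h = (\<Sum>k\<le>2*h. U ^ k)"
    using \<open>U $ 0 = 0\<close> assms
    by (simp add: fps_compose_power Q_root_power_self fps_compose_sum_distrib fps_X_power_compose)
  then have "U ^ h = fps_X ^ h * (\<Sum>k\<le>2*h. U ^ k)"
    by (subst U) (simp add: power_mult_distrib)
  with \<open>U $ 0 = 0\<close> \<open>U $ 1 = 1\<close>
  show "U $ 0 = 0 \<and> U $ 1 = 1 \<and> U ^ h = fps_X ^ h * (\<Sum>k\<le>2*h. U ^ k)"
    by blast
next
  assume U: "U $ 0 = 0 \<and> U $ 1 = 1 \<and> U ^ h = fps_X ^ h * (\<Sum>k\<le>2*h. U ^ k)"
  define V where "V = fps_shift 1 U"
  have "U = fps_X * V" by (rule fps_ext) (simp add: V_def fps_X_mult_nth U)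
  have "(\<Sum>k\<le>2*h. U ^ k) = (Q_root h oo U) ^ h"
    using U assms
    by (simp add: fps_compose_power Q_root_power_self fps_compose_sum_distrib fps_X_power_compose)
  then have "V ^ h = (Q_root h oo U) ^ h"
    using U \<open>U = fps_X * V\<close> by (simp add: power_mult_distrib)
  then have "V = Q_root h oo U"
    by (rule fps_power_eq_imp_eq) (use U assms in \<open>simp_all add: V_def\<close>)
  then show "U = fps_X * (Q_root h oo U)" using \<open>U = fps_X * V\<close> by simp
qed

lemma fixpoint_power_nth:
  fixes U :: "'a::real_field fps"
  assumes U: "U = fps_X * (Q_root h oo U)" and "m \<ge> 1"
  shows "(U ^ m) $ n = (if n \<ge> m then of_real (real m / real n *
                 gbinom_m (real n / real h) (2*h+1) (int n - int m)) else 0)"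
proof (cases "n \<ge> m")
  case True
  have "of_nat n * (U ^ m) $ n = of_nat m * (Q_root h ^ n) $ (n - m)"
    using fps_lagrange_inversion[OF U] \<open>m \<ge> 1\<close> True by simp
  then show ?thesis
    using True \<open>m \<ge> 1\<close> by (simp add: Q_root_power_nth field_simps)
next
  case False
  have "U ^ m = fps_X ^ m * (Q_root h oo U) ^ m" by (subst U) (simp add: power_mult_distrib)
  then show ?thesis using False by (simp add: fps_X_power_mult_nth)
qed

lemma ex1_solution:
  assumes "h \<ge> 1"
  shows "\<exists>!U :: 'a::real_field fps.
    U $ 0 = 0 \<and> U $ 1 = 1 \<and> U ^ h = fps_X ^ h * (\<Sum>k\<le>2*h. U ^ k)"
  unfolding solution_iff_fixpoint[OF assms]
proof (rule ex_ex1I)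
  show "\<exists>U :: 'a fps. U = fps_X * (Q_root h oo U)" by (simp add: fps_fixpoint_exists)
next
  fix U V :: "'a fps"
  assume "U = fps_X * (Q_root h oo U)" "V = fps_X * (Q_root h oo V)"
  from this[THEN fixpoint_power_nth, of 1] show "U = V"
    by (simp add: fps_eq_iff)
qed

lemma proots_eq_mset_set:
  fixes p :: "'a::idom poly"
  assumes "p \<noteq> 0" "finite S" "degree p \<le> card S" "\<And>x. x \<in> S \<Longrightarrow> poly p x = 0"
  shows "proots p = mset_set S"
proof -
  have "mset_set S \<subseteq># proots p"
  proof (rule mset_subset_eqI)
    fix x
    show "count (mset_set S) x \<le> count (proots p) x"
      using assms order_root[of p x] by (cases "x \<in> S") (auto simp: count_proots)
  qed
  moreover have "size (proots p) \<le> size (mset_set S)"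
    using size_proots_le[of p] assms(3) by simp
  ultimately show ?thesis
    using mset_subset_size[of "mset_set S" "proots p"] by (fastforce simp: subset_mset.less_le)
qed

lemma small_large_roots_eq:
  fixes p :: "complex fls poly"
  assumes "p \<noteq> 0" "finite A" "finite B" "degree p \<le> card A + card B"
    and A: "\<And>x. x \<in> A \<Longrightarrow> poly p x = 0 \<and> x \<noteq> 0 \<and> fls_subdegree x > 0"
    and B: "\<And>x. x \<in> B \<Longrightarrow> poly p x = 0 \<and> x \<noteq> 0 \<and> fls_subdegree x < 0"
  shows "small_roots p = mset_set A" "large_roots p = mset_set B"
proof -
  have "A \<inter> B = {}" using A B by fastforce
  then have "proots p = mset_set (A \<union> B)"
    using assms by (intro proots_eq_mset_set) (auto simp: card_Un_disjoint)
  moreover have "{x \<in> A \<union> B. x \<noteq> 0 \<and> 0 < fls_subdegree x} = A"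
    "{x \<in> A \<union> B. x \<noteq> 0 \<and> fls_subdegree x < 0} = B"
    using A B by force+
  ultimately show "small_roots p = mset_set A" "large_roots p = mset_set B"
    using assms(2,3) by (simp_all add: small_roots_def large_roots_def filter_mset_mset_set)
qed

lemma poly_root_eq_poly: "poly (root_eq_poly h) r = r ^ h - fls_X ^ h * (\<Sum>k\<le>2*h. r ^ k)"
  by (simp add: root_eq_poly_def Qpoly_def poly_monom poly_sum)

lemma root_eq_poly_nonzero_degree:
  assumes "h \<ge> 1"
  shows "root_eq_poly h \<noteq> 0" "degree (root_eq_poly h) \<le> 2*h"
proof -
  have coeff: "coeff (root_eq_poly h) i =
      (if i = h then 1 else 0) - (if i \<le> 2*h then fls_X ^ h else 0)" for i
    by (simp add: root_eq_poly_def Qpoly_def coeff_sum coeff_monom)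
  show "root_eq_poly h \<noteq> 0"
    using coeff[of "2*h"] assms by (auto simp del: power_eq_0_iff)
  show "degree (root_eq_poly h) \<le> 2*h"
    by (rule degree_le) (simp add: coeff)
qed

lemma poly_root_eq_poly_inverse:
  assumes "r \<noteq> 0"
  shows "r ^ (2*h) * poly (root_eq_poly h) (inverse r) = poly (root_eq_poly h) r"
proof -
  have cancel: "r ^ (2*h) * inverse r ^ k = r ^ (2*h - k)" if "k \<le> 2*h" for k
  proof -
    have "r ^ (2*h) = r ^ (2*h - k) * r ^ k" using that by (simp flip: power_add)
    then show ?thesis using assms by (simp add: power_inverse[symmetric] field_simps)
  qed
  then have "r ^ (2*h) * (\<Sum>k\<le>2*h. inverse r ^ k) = (\<Sum>k\<le>2*h. r ^ (2*h - k))"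
    by (simp add: sum_distrib_left)
  also have "\<dots> = (\<Sum>k\<le>2*h. r ^ k)"
    by (rule sum.reindex_bij_witness[where i="\<lambda>k. 2*h - k" and j="\<lambda>k. 2*h - k"]) auto
  moreover have "r ^ (2*h) * inverse r ^ h = r ^ h"
    using cancel[of h] by simp
  ultimately show ?thesis
    by (simp add: poly_root_eq_poly right_diff_distrib mult.left_commute)
qed

lemma fps_compose_scale_solution:
  fixes U :: "'a::idom fps"
  assumes eq: "U ^ h = fps_X ^ h * (\<Sum>k\<le>2*h. U ^ k)" and "c ^ h = 1"
  defines "L \<equiv> fps_const c * fps_X"
  shows "(U oo L) ^ h = fps_X ^ h * (\<Sum>k\<le>2*h. (U oo L) ^ k)"
proof -
  have "L $ 0 = 0" by (simp add: L_def)
  have "fps_X ^ h oo L = L ^ h" by (rule fps_X_power_compose[OF \<open>L $ 0 = 0\<close>])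
  also have "\<dots> = fps_X ^ h"
    using \<open>c ^ h = 1\<close> by (simp add: L_def power_mult_distrib fps_const_power)
  finally have X: "fps_X ^ h oo L = fps_X ^ h" .
  have "(U oo L) ^ h = U ^ h oo L" by (rule fps_compose_power[OF \<open>L $ 0 = 0\<close>])
  also have "\<dots> = (fps_X ^ h oo L) * (\<Sum>k\<le>2*h. U ^ k oo L)"
    by (simp add: eq fps_compose_mult_distrib[OF \<open>L $ 0 = 0\<close>] fps_compose_sum_distrib)
  also have "\<dots> = fps_X ^ h * (\<Sum>k\<le>2*h. (U oo L) ^ k)"
    by (simp add: X fps_compose_power[OF \<open>L $ 0 = 0\<close>])
  finally show ?thesis .
qed

lemma inj_on_power_root_unity:
  assumes "h \<ge> 1"
  shows "inj_on (\<lambda>i. cis (2 * pi / real h) ^ i) {..<h}"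
proof -
  have "(\<lambda>i. cis (2 * pi / real h) ^ i) = (\<lambda>k. cis (2 * pi * real k / real h))"
    by (simp add: DeMoivre mult.commute)
  then show ?thesis
    using bij_betw_roots_unity[of h] assms by (simp add: bij_betw_def)
qed

lemma root_eq_poly_scaled_root:
  fixes U :: "complex fps"
  assumes "h \<ge> 1" "c ^ h = 1"
    and U: "U $ 0 = 0" "U $ 1 = 1" "U ^ h = fps_X ^ h * (\<Sum>k\<le>2*h. U ^ k)"
  defines "v \<equiv> fps_to_fls (U oo (fps_const c * fps_X))"
  shows "poly (root_eq_poly h) v = 0" "fls_nth v 1 = c" "fls_subdegree v = 1"
proof -
  from arg_cong[OF fps_compose_scale_solution[OF U(3) \<open>c ^ h = 1\<close>], of fps_to_fls]
  show "poly (root_eq_poly h) v = 0"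
    by (simp add: poly_root_eq_poly v_def fls_times_fps_to_fls fps_to_fls_power fps_to_fls_sum)
  show "fls_nth v 1 = c"
    using U by (simp add: v_def fps_compose_linear)
  moreover have "c \<noteq> 0"
    by (rule ccontr) (use assms(1,2) in \<open>auto simp: power_0_left\<close>)
  ultimately show "fls_subdegree v = 1"
    using U by (intro fls_subdegree_eqI) (simp_all add: v_def fps_compose_linear)
qed

lemma root_eq_poly_roots:
  fixes U :: "complex fps"
  assumes "h \<ge> 1" and U: "U $ 0 = 0" "U $ 1 = 1" "U ^ h = fps_X ^ h * (\<Sum>k\<le>2*h. U ^ k)"
  defines "u \<equiv> \<lambda>i. fps_to_fls (U oo (fps_const (cis (2 * pi / real h) ^ i) * fps_X))"
  shows "small_roots (root_eq_poly h) = image_mset u (mset_set {..<h})"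
    and "large_roots (root_eq_poly h) = image_mset (\<lambda>i. inverse (u i)) (mset_set {..<h})"
proof -
  have "cis (2 * pi / real h) ^ h = 1"
    using \<open>h \<ge> 1\<close> by (simp add: DeMoivre)
  then have "(cis (2 * pi / real h) ^ i) ^ h = 1" for i
    by (metis power_mult mult.commute power_one)
  then have scaled: "poly (root_eq_poly h) (u i) = 0"
      "fls_nth (u i) 1 = cis (2 * pi / real h) ^ i" "fls_subdegree (u i) = 1" for i
    unfolding u_def using root_eq_poly_scaled_root[OF \<open>h \<ge> 1\<close> _ U] by blast+
  have "u i \<noteq> 0" for i
    using scaled(2)[of i] by (metis cis_neq_zero fls_zero_nth power_not_zero)
  have "inj_on u {..<h}"
    using inj_on_power_root_unity[OF \<open>h \<ge> 1\<close>] scaled(2) by (metis inj_on_def)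
  then have "inj_on (\<lambda>i. inverse (u i)) {..<h}"
    by (auto simp: inj_on_def)
  have small: "poly (root_eq_poly h) x = 0 \<and> x \<noteq> 0 \<and> fls_subdegree x > 0"
    if "x \<in> u ` {..<h}" for x
    using that scaled \<open>\<And>i. u i \<noteq> 0\<close> by auto
  have large: "poly (root_eq_poly h) x = 0 \<and> x \<noteq> 0 \<and> fls_subdegree x < 0"
    if "x \<in> (\<lambda>i. inverse (u i)) ` {..<h}" for x
    using that scaled \<open>\<And>i. u i \<noteq> 0\<close> poly_root_eq_poly_inverse[of "u _" h] by auto
  have deg: "degree (root_eq_poly h) \<le> card (u ` {..<h}) + card ((\<lambda>i. inverse (u i)) ` {..<h})"
    using root_eq_poly_nonzero_degree(2)[OF \<open>h \<ge> 1\<close>] \<open>inj_on u {..<h}\<close>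
      \<open>inj_on (\<lambda>i. inverse (u i)) {..<h}\<close> by (simp add: card_image)
  note roots = small_large_roots_eq[OF root_eq_poly_nonzero_degree(1)[OF \<open>h \<ge> 1\<close>]
      finite_imageI finite_imageI deg small large]
  show "small_roots (root_eq_poly h) = image_mset u (mset_set {..<h})"
    and "large_roots (root_eq_poly h) = image_mset (\<lambda>i. inverse (u i)) (mset_set {..<h})"
    using roots \<open>inj_on u {..<h}\<close> \<open>inj_on (\<lambda>i. inverse (u i)) {..<h}\<close>
    by (simp_all add: image_mset_mset_set)
qed

theorem proposition4p5:
  fixes h :: nat
  assumes "h \<ge> 1"
  shows "(\<exists>!U :: complex fps. U $ 0 = 0 \<and> U $ 1 = 1 \<and>
            U ^ h = fps_X ^ h * (\<Sum>k\<le>2*h. U ^ k))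
   \<and> (\<forall>U :: complex fps. U $ 0 = 0 \<and> U $ 1 = 1 \<and>
            U ^ h = fps_X ^ h * (\<Sum>k\<le>2*h. U ^ k) \<longrightarrow>
        (let \<omega> = cis (2 * pi / real h);
             u = (\<lambda>i::nat. fps_to_fls (U oo (fps_const (\<omega> ^ i) * fps_X)))
         in small_roots (root_eq_poly h) = image_mset u (mset_set {..<h})
          \<and> large_roots (root_eq_poly h) = image_mset (\<lambda>i. inverse (u i)) (mset_set {..<h}))
      \<and> (\<forall>m::nat. m \<ge> 1 \<longrightarrow> (\<forall>n::nat. (U ^ m) $ n =
            (if n \<ge> m then complex_of_real (real m / real n *
                 gbinom_m (real n / real h) (2*h+1) (int n - int m)) else 0))))"
proof (intro conjI allI impI ex1_solution[OF assms], goal_cases)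
  case (1 U)
  then show ?case
    using root_eq_poly_roots[OF assms, of U] by (simp add: Let_def)
next
  case (2 U m n)
  then have "U = fps_X * (Q_root h oo U)"
    using solution_iff_fixpoint[OF assms] by blast
  then show ?case
    using fixpoint_power_nth \<open>m \<ge> 1\<close> by blast
qed

end
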